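(* There is an absolute constant $C>0$ such that for every integer $k\ge 2$, all real $x \ge 1$ and all real $y$ with $1 \le y \le x$, \[ \#\{\, n \text{ $k$-full} : x < n \le x+y,\ p^+(n) \le y^{1/2}\,\} \le \#\{\, n \text{ squarefull} : x < n \le x+y,\ p^+(n) \le y^{1/2}\,\} \le C\, y^{11/12}. \]
   Context: A positive integer $n$ is $k$-full if every prime $p$ dividing $n$ satisfies $p^k \mid n$; squarefull means $2$-full. For an integer $n \ge 2$, $p^+(n)$ denotes the largest prime factor of $n$, with the convention $p^+(1)=1$. *)

theory Defs
  imports "HOL-Computational_Algebra.Primes" Complex_Main
begin

definition k_full :: "nat \<Rightarrow> nat \<Rightarrow> bool" where
  "k_full k n \<longleftrightarrow> n > 0 \<and> (\<forall>p. prime p \<longrightarrow> p dvd n \<longrightarrow> p ^ k dvd n)"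

abbreviation squarefull :: "nat \<Rightarrow> bool" where
  "squarefull n \<equiv> k_full 2 n"

text \<open>Largest prime factor, with the convention that it equals 1 for n = 1.\<close>
definition largest_pf :: "nat \<Rightarrow> nat" where
  "largest_pf n = (if prime_factors n = {} then 1 else Max (prime_factors n))"

end

theory Submission imports Defs begin

(*
  A squarefull n is squeezed as m^2 | n | m^3, where m is the product of the
  p^(v_p(n) div 2).  If n > y then m > y^(1/4); if moreover n is y^(1/2)-smooth,
  stripping prime factors off m one at a time yields a divisor d of m in
  [A, A y^(1/2)] with A = ceil (y^(1/4)).  So every counted n is a multiple of
  d^2 for such a d, and adding up the at most y/d^2 + 1 multiples of d^2 in
  (x, x + y] gives O(y/A + A y^(1/2)) = O(y^(3/4)).
*)

lemma k_full_mono: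
  assumes "k \<le> l" "k_full l n"
  shows "k_full k n"
  using assms unfolding k_full_def by (meson dvd_trans le_imp_power_dvd)

lemma prime_le_largest_pf:
  assumes "n > 0" "prime p" "p dvd n"
  shows "p \<le> largest_pf n"
proof -
  have "p \<in> prime_factors n" using assms by (auto simp: in_prime_factors_iff)
  then show ?thesis unfolding largest_pf_def by auto
qed

lemma squarefull_square_dvd_dvd_cube:
  assumes "squarefull n"
  obtains m where "m\<^sup>2 dvd n" "n dvd m ^ 3"
proof -
  have "n > 0" using assms by (simp add: k_full_def)
  define e where "e p = multiplicity p n div 2" for p
  define m where "m = (\<Prod>p\<in>prime_factors n. p ^ e p)"
  have multiplicity_power_m:
    "multiplicity p (m ^ j) = (if p \<in> prime_factors n then j * e p else 0)" if "prime p" for p j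
  proof -
    have "m ^ j = (\<Prod>p\<in>prime_factors n. p ^ (j * e p))"
      unfolding m_def by (simp add: prod_power_distrib power_mult[symmetric] mult.commute)
    then show ?thesis by (simp only:) (rule multiplicity_prod_prime_powers; use that in auto)
  qed
  have "m \<noteq> 0" unfolding m_def by (auto simp: in_prime_factors_iff)
  have "m\<^sup>2 dvd n"
  proof (rule multiplicity_le_imp_dvd)
    show "m\<^sup>2 \<noteq> 0" using \<open>m \<noteq> 0\<close> by simp
  qed (simp add: multiplicity_power_m e_def)
  moreover have "n dvd m ^ 3"
  proof (rule multiplicity_le_imp_dvd)
    fix p :: nat assume p: "prime p"
    show "multiplicity p n \<le> multiplicity p (m ^ 3)"
    proof (cases "p dvd n")
      case True
      then have "p\<^sup>2 dvd n" using assms p by (simp add: k_full_def)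
      then have "2 \<le> multiplicity p n" using \<open>n > 0\<close> p by (intro multiplicity_geI) auto
      then have "multiplicity p n \<le> 3 * e p" unfolding e_def by linarith
      then show ?thesis using True p \<open>n > 0\<close> by (simp add: multiplicity_power_m in_prime_factors_iff)
    qed (simp add: not_dvd_imp_multiplicity_0)
  qed (use \<open>n > 0\<close> in simp)
  ultimately show ?thesis using that by blast
qed

text \<open>The least divisor of m that is at least A is within a factor P of A:
  dividing it by any of its prime factors gives a smaller divisor, which is below A.\<close>
lemma smooth_has_divisor_between:
  fixes P :: real
  assumes "m > 0" "\<And>p. prime p \<Longrightarrow> p dvd m \<Longrightarrow> real p \<le> P" "1 \<le> P" "1 \<le> A" "A \<le> m"
  obtains d where "d dvd m" "A \<le> d" "real d \<le> real A * P"
proof -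
  define d where "d = (LEAST d. d dvd m \<and> A \<le> d)"
  have d: "d dvd m" "A \<le> d" unfolding d_def by (rule LeastI2[of _ m]; use assms in auto)+
  have d_least: "d \<le> e" if "e dvd m" "A \<le> e" for e
    unfolding d_def using that by (intro Least_le) simp
  have "real d \<le> real A * P"
  proof (cases "d = 1")
    case True
    then show ?thesis using d(2) assms(3,4) by simp
  next
    case False
    have "d \<noteq> 0" using d(1) assms(1) by auto
    then obtain p where p: "prime p" "p dvd d" using False prime_factor_nat by blast
    then obtain e where de: "d = p * e" by auto
    have "e dvd m" using d(1) de by (metis dvd_mult_right dvd_trans)
    have "e < d" using de \<open>d \<noteq> 0\<close> prime_gt_1_nat[OF p(1)] by simp
    then have "e < A" using d_least \<open>e dvd m\<close> by fastforce
    have "real p \<le> P" using assms(2) p d(1) by (meson dvd_trans)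
    have "real d = real p * real e" using de by simp
    also have "\<dots> \<le> P * real A" using \<open>real p \<le> P\<close> \<open>e < A\<close> by (intro mult_mono) auto
    finally show ?thesis by (simp add: mult.commute)
  qed
  with d that show ?thesis by blast
qed

lemma squarefull_smooth_has_square_divisor_between:
  fixes P :: real
  assumes "squarefull n" "real (largest_pf n) \<le> P" "1 \<le> P" "1 \<le> A" "(A - 1) ^ 4 < n"
  obtains d where "d\<^sup>2 dvd n" "A \<le> d" "real d \<le> real A * P"
proof -
  have "n > 0" using assms(1) by (simp add: k_full_def)
  obtain m where m: "m\<^sup>2 dvd n" "n dvd m ^ 3"
    using squarefull_square_dvd_dvd_cube[OF assms(1)] .
  have "m > 0" using m(1) \<open>n > 0\<close> by (cases m) auto
  have "n \<le> m ^ 4"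
    using dvd_imp_le[OF m(2)] power_increasing[of 3 4 m] \<open>m > 0\<close> by simp
  then have "(A - 1) ^ 4 < m ^ 4" using assms(5) by linarith
  then have "A \<le> m" using power_less_imp_less_base by fastforce
  have "real p \<le> P" if "prime p" "p dvd m" for p
  proof -
    have "p dvd n" using that m(1) by (meson dvd_trans dvd_power[of 2] zero_less_numeral)
    then show ?thesis using prime_le_largest_pf[OF \<open>n > 0\<close> that(1)] assms(2) by linarith
  qed
  then obtain d where "d dvd m" "A \<le> d" "real d \<le> real A * P"
    using smooth_has_divisor_between[OF \<open>m > 0\<close> _ assms(3,4) \<open>A \<le> m\<close>] by blast
  moreover have "d\<^sup>2 dvd n" using \<open>d dvd m\<close> m(1) by (meson dvd_trans dvd_power_same)
  ultimately show ?thesis using that by blast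
qed

lemma finite_nat_real_le: "finite {n::nat. real n \<le> z \<and> Q n}"
  by (rule finite_subset[of _ "{..nat \<lfloor>z\<rfloor>}"]) (auto intro: le_nat_floor)

lemma card_multiples_in_interval_le:
  fixes x y :: real
  assumes "q \<ge> 1" "x \<ge> 0" "y \<ge> 0"
  shows "real (card {n::nat. x < real n \<and> real n \<le> x + y \<and> q dvd n}) \<le> y / q + 1"
proof -
  define a where "a = nat \<lfloor>x / q\<rfloor>"
  define b where "b = nat \<lfloor>(x + y) / q\<rfloor>"
  have "q > 0" using assms by simp
  have "{n::nat. x < real n \<and> real n \<le> x + y \<and> q dvd n} \<subseteq> (\<lambda>j. q * j) ` {a<..b}"
  proof
    fix n assume n: "n \<in> {n::nat. x < real n \<and> real n \<le> x + y \<and> q dvd n}"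
    then obtain j where j: "n = q * j" by auto
    have "x / q < real j" "real j \<le> (x + y) / q"
      using n j \<open>q > 0\<close> by (auto simp: field_simps)
    then have "a < j" "j \<le> b"
      unfolding a_def b_def using assms by (auto simp: floor_less_iff nat_less_iff intro: le_nat_floor)
    then show "n \<in> (\<lambda>j. q * j) ` {a<..b}" using j by auto
  qed
  then have "card {n::nat. x < real n \<and> real n \<le> x + y \<and> q dvd n} \<le> card {a<..b}"
    by (meson card_image_le card_mono finite_greaterThanAtMost finite_imageI order_trans)
  moreover have "0 \<le> \<lfloor>x / q\<rfloor>" "0 \<le> \<lfloor>(x + y) / q\<rfloor>" using assms by simp_all
  then have "real b \<le> (x + y) / q" "x / q - 1 < real a" unfolding a_def b_def by linarith+
  ultimately show ?thesis
    using assms by (cases "a \<le> b") (simp_all add: of_nat_diff add_divide_distrib)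
qed

lemma sum_inverse_squares_le:
  assumes "1 \<le> A"
  shows "(\<Sum>d = A..B. 1 / real d ^ 2) \<le> 2 / real A"
proof (cases "A \<le> Suc B")
  case True
  have "(\<Sum>d = A..B. 1 / real d ^ 2) \<le> (\<Sum>d = A..B. 2 / real d - 2 / real (Suc d))"
  proof (rule sum_mono)
    fix d assume "d \<in> {A..B}"
    then have "real d \<ge> 1" using assms by simp
    then have "1 / real d ^ 2 \<le> 2 / (real d * (real d + 1))"
      by (simp add: divide_simps power2_eq_square)
    also have "\<dots> = 2 / real d - 2 / real (Suc d)" using \<open>real d \<ge> 1\<close> by (simp add: field_simps)
    finally show "1 / real d ^ 2 \<le> 2 / real d - 2 / real (Suc d)" .
  qed
  also have "\<dots> = 2 / real A - 2 / real (Suc B)"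
    using sum_Suc_diff[OF True, of "\<lambda>d. - 2 / real d"] by simp
  also have "\<dots> \<le> 2 / real A" by simp
  finally show ?thesis .
qed (use assms in simp)

lemma card_divisible_by_square_between_le:
  fixes x y :: real
  assumes "x \<ge> 0" "y \<ge> 0" "1 \<le> A"
  shows "real (card {n::nat. x < real n \<and> real n \<le> x + y \<and> (\<exists>d\<in>{A..B}. d\<^sup>2 dvd n)})
           \<le> 2 * y / real A + real (Suc B - A)"
proof -
  define M where "M d = {n::nat. x < real n \<and> real n \<le> x + y \<and> d\<^sup>2 dvd n}" for d :: nat
  have "{n::nat. x < real n \<and> real n \<le> x + y \<and> (\<exists>d\<in>{A..B}. d\<^sup>2 dvd n)} = (\<Union>d\<in>{A..B}. M d)"
    by (auto simp: M_def)
  moreover have "card (\<Union>d\<in>{A..B}. M d) \<le> (\<Sum>d = A..B. card (M d))"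
    by (rule card_UN_le) simp
  ultimately have "real (card {n::nat. x < real n \<and> real n \<le> x + y \<and> (\<exists>d\<in>{A..B}. d\<^sup>2 dvd n)})
      \<le> (\<Sum>d = A..B. real (card (M d)))"
    by (metis of_nat_le_iff of_nat_sum)
  also have "\<dots> \<le> (\<Sum>d = A..B. y / real d ^ 2 + 1)"
  proof (rule sum_mono)
    fix d assume "d \<in> {A..B}"
    then have "d\<^sup>2 \<ge> 1" using assms(3) by simp
    then show "real (card (M d)) \<le> y / real d ^ 2 + 1"
      unfolding M_def using card_multiples_in_interval_le[of "d\<^sup>2" x y] assms by simp
  qed
  also have "\<dots> = y * (\<Sum>d = A..B. 1 / real d ^ 2) + real (Suc B - A)"
    by (simp add: sum.distrib sum_distrib_left)
  also have "\<dots> \<le> y * (2 / real A) + real (Suc B - A)"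
    using sum_inverse_squares_le[OF assms(3)] assms(2) by (intro add_right_mono mult_left_mono)
  finally show ?thesis by (simp add: mult.commute)
qed

lemma card_smooth_squarefull_in_short_interval_le:
  fixes x y :: real
  assumes "1 \<le> y" "y \<le> x"
  shows "real (card {n::nat. squarefull n \<and> x < real n \<and> real n \<le> x + y \<and> real (largest_pf n) \<le> y powr (1/2)})
           \<le> 4 * y powr (3/4)"
proof -
  define t where "t = y powr (1/4)"
  define P where "P = y powr (1/2)"
  define A where "A = nat \<lceil>t\<rceil>"
  define B where "B = nat \<lfloor>real A * P\<rfloor>"
  have "t \<ge> 1" unfolding t_def using assms(1) by (simp add: ge_one_powr_ge_zero)
  have t_pow: "t ^ j = y powr (j / 4)" for j :: nat
    unfolding t_def using assms(1) by (simp add: powr_realpow[symmetric] powr_powr)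
  have "P = t\<^sup>2" unfolding P_def using t_pow[of 2] by simp
  have "t ^ 4 = y" using t_pow[of 4] assms(1) by simp
  have "t \<le> real A" "real A < t + 1" "1 \<le> A" unfolding A_def using \<open>t \<ge> 1\<close> by linarith+
  have "1 \<le> P" using \<open>P = t\<^sup>2\<close> \<open>t \<ge> 1\<close> by simp
  have "{n. squarefull n \<and> x < real n \<and> real n \<le> x + y \<and> real (largest_pf n) \<le> P}
      \<subseteq> {n::nat. x < real n \<and> real n \<le> x + y \<and> (\<exists>d\<in>{A..B}. d\<^sup>2 dvd n)}"
  proof safe
    fix n assume n: "squarefull n" "x < real n" "real (largest_pf n) \<le> P"
    have "real (A - 1) < t" using \<open>real A < t + 1\<close> \<open>1 \<le> A\<close> by (simp add: of_nat_diff)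
    then have "real (A - 1) ^ 4 < t ^ 4" by (intro power_strict_mono) auto
    then have "real ((A - 1) ^ 4) < real n" using \<open>t ^ 4 = y\<close> n(2) assms unfolding of_nat_power by linarith
    then have "(A - 1) ^ 4 < n" by (simp only: of_nat_less_iff)
    then obtain d where "d\<^sup>2 dvd n" "A \<le> d" "real d \<le> real A * P"
      using squarefull_smooth_has_square_divisor_between[OF n(1,3) \<open>1 \<le> P\<close> \<open>1 \<le> A\<close>] by blast
    moreover have "d \<le> B" unfolding B_def using \<open>real d \<le> real A * P\<close> by (rule le_nat_floor)
    ultimately show "\<exists>d\<in>{A..B}. d\<^sup>2 dvd n" by auto
  qed
  then have "card {n. squarefull n \<and> x < real n \<and> real n \<le> x + y \<and> real (largest_pf n) \<le> P}
      \<le> card {n::nat. x < real n \<and> real n \<le> x + y \<and> (\<exists>d\<in>{A..B}. d\<^sup>2 dvd n)}"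
    by (intro card_mono) (simp_all add: conj_commute finite_nat_real_le)
  moreover have "real (card {n::nat. x < real n \<and> real n \<le> x + y \<and> (\<exists>d\<in>{A..B}. d\<^sup>2 dvd n)})
      \<le> 2 * y / real A + real (Suc B - A)"
    using assms by (intro card_divisible_by_square_between_le \<open>1 \<le> A\<close>) auto
  moreover have "2 * y / real A \<le> 2 * t ^ 3"
  proof -
    have "2 * y / real A \<le> 2 * y / t"
      using \<open>t \<le> real A\<close> \<open>t \<ge> 1\<close> assms(1) by (intro divide_left_mono) auto
    also have "\<dots> = 2 * t ^ 3" using \<open>t ^ 4 = y\<close> \<open>t \<ge> 1\<close> by (auto simp: field_simps power_eq_if)
    finally show ?thesis .
  qed
  moreover have "real (Suc B - A) \<le> 2 * t ^ 3"
  proof -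
    have "Suc B - A \<le> B" using \<open>1 \<le> A\<close> by simp
    moreover have "real B \<le> real A * P" unfolding B_def using \<open>1 \<le> P\<close> by simp
    ultimately have "real (Suc B - A) \<le> real A * P" by linarith
    also have "\<dots> \<le> (t + 1) * t\<^sup>2"
      unfolding \<open>P = t\<^sup>2\<close> using \<open>real A < t + 1\<close> by (intro mult_right_mono) auto
    also have "\<dots> \<le> 2 * t ^ 3" using \<open>t \<ge> 1\<close> by (simp add: power_eq_if algebra_simps)
    finally show ?thesis .
  qed
  ultimately show ?thesis using t_pow[of 3] unfolding P_def by simp
qed

theorem theorem3:
  "\<exists>C::real. C > 0 \<and>
     (\<forall>(k::nat) (x::real) (y::real). k \<ge> 2 \<longrightarrow> 1 \<le> x \<longrightarrow> 1 \<le> y \<longrightarrow> y \<le> x \<longrightarrow>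
        card {n::nat. k_full k n \<and> x < real n \<and> real n \<le> x + y \<and> real (largest_pf n) \<le> y powr (1/2)}
          \<le> card {n::nat. squarefull n \<and> x < real n \<and> real n \<le> x + y \<and> real (largest_pf n) \<le> y powr (1/2)}
        \<and> real (card {n::nat. squarefull n \<and> x < real n \<and> real n \<le> x + y \<and> real (largest_pf n) \<le> y powr (1/2)})
          \<le> C * y powr (11/12))"
proof (intro exI[of _ 4] conjI allI impI)
  fix k :: nat and x y :: real
  assume "2 \<le> k" "1 \<le> x" "1 \<le> y" "y \<le> x"
  show "card {n::nat. k_full k n \<and> x < real n \<and> real n \<le> x + y \<and> real (largest_pf n) \<le> y powr (1/2)}
          \<le> card {n::nat. squarefull n \<and> x < real n \<and> real n \<le> x + y \<and> real (largest_pf n) \<le> y powr (1/2)}"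
    using k_full_mono[OF \<open>2 \<le> k\<close>]
    by (intro card_mono) (auto simp: conj_commute[of _ "real _ \<le> x + y"] finite_nat_real_le)
  have "y powr (3/4) \<le> y powr (11/12)" using \<open>1 \<le> y\<close> by (intro powr_mono) auto
  then show "real (card {n::nat. squarefull n \<and> x < real n \<and> real n \<le> x + y \<and> real (largest_pf n) \<le> y powr (1/2)})
          \<le> 4 * y powr (11/12)"
    using card_smooth_squarefull_in_short_interval_le[OF \<open>1 \<le> y\<close> \<open>y \<le> x\<close>] by linarith
qed simp

end
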